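(* Let $\boldsymbol{x}\in\mathbb{R}^n\setminus\{0\}$, $\alpha>0$, and let $\boldsymbol{s}(t,\boldsymbol{x})=\boldsymbol{x}\sum_jc(t-\tau_j)$ be a stimulus (see context). Consider $$\dot{\boldsymbol{w}}=\alpha\,v(\boldsymbol{s}(t,\boldsymbol{x}),\boldsymbol{w},\theta)\,y(\boldsymbol{s}(t,\boldsymbol{x}),\boldsymbol{w})\big(\boldsymbol{s}(t,\boldsymbol{x})-\boldsymbol{w}\,y(\boldsymbol{s}(t,\boldsymbol{x}),\boldsymbol{w})\big),\qquad\boldsymbol{w}(t_0)=\boldsymbol{w}_0\ne0,$$ with solution $\boldsymbol{w}(t,\boldsymbol{w}_0)$. Let $\theta\ge0$ and $\langle\boldsymbol{w}_0,\boldsymbol{x}\rangle>\theta$, and let the stimulus be persistent: for every $t'\ge t_0$ there is $t''>t'$ with $\boldsymbol{s}(t'',\boldsymbol{x})\ne0$. Then: 1) if $\theta<\|\boldsymbol{x}\|$, then $\lim_{t\to\infty}\boldsymbol{w}(t,\boldsymbol{w}_0)=\boldsymbol{x}/\|\boldsymbol{x}\|$; 2) if $\theta\ge\|\boldsymbol{x}\|$, then $\lim_{t\to\infty}\langle\boldsymbol{w}(t,\boldsymbol{w}_0),\boldsymbol{x}/\|\boldsymbol{x}\|\rangle=\theta/\|\boldsymbol{x}\|$.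
   Context: Notation: $\langle\cdot,\cdot\rangle$ and $\|\cdot\|$ are the Euclidean inner product and norm on $\mathbb{R}^n$. Stimulus: fix $\Delta T>0$ and $c(t)=1$ for $t\in[0,\Delta T]$, $c(t)=0$ otherwise; $\boldsymbol{s}(t,\boldsymbol{x})=\boldsymbol{x}\sum_jc(t-\tau_j)$ with presentation times satisfying $\tau_{j+1}>\tau_j+\Delta T$. Neuron: $y(\boldsymbol{s},\boldsymbol{w})=\langle\boldsymbol{w},\boldsymbol{s}\rangle$, $v(\boldsymbol{s},\boldsymbol{w},\theta)=f(y(\boldsymbol{s},\boldsymbol{w})-\theta)$ with $f:\mathbb{R}\to\mathbb{R}$ continuous, locally Lipschitz, $f(u)=0$ for $u\le0$, $f(u)>0$ for $u>0$. *)

theory Defs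
  imports "HOL-Analysis.Analysis"
begin

definition pulse :: "real \<Rightarrow> real \<Rightarrow> real" where
  "pulse DT t = (if 0 \<le> t \<and> t \<le> DT then 1 else 0)"

definition stimulus :: "real \<Rightarrow> (nat \<Rightarrow> real) \<Rightarrow> real \<Rightarrow> real^'n \<Rightarrow> real^'n" where
  "stimulus DT tau t x = (\<Sum>j. pulse DT (t - tau j)) *\<^sub>R x"

definition neuron_y :: "real^'n \<Rightarrow> real^'n \<Rightarrow> real" where
  "neuron_y s w = w \<bullet> s"

definition neuron_v :: "(real \<Rightarrow> real) \<Rightarrow> real^'n \<Rightarrow> real^'n \<Rightarrow> real \<Rightarrow> real" where
  "neuron_v f s w \<theta> = f (neuron_y s w - \<theta>)"

definition learning_rhs ::
  "real \<Rightarrow> (real \<Rightarrow> real) \<Rightarrow> real \<Rightarrow> real^'n \<Rightarrow> real^'n \<Rightarrow> real^'n" where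
  "learning_rhs \<alpha> f \<theta> s w =
     (\<alpha> * neuron_v f s w \<theta> * neuron_y s w) *\<^sub>R (s - neuron_y s w *\<^sub>R w)"

end

theory Submission
  imports Defs
begin

text \<open>
  During a pulse the projection p = w \<bullet> x obeys p' = \<alpha> f(p - \<theta>) p (|x|^2 - p^2),
  and between pulses nothing moves. Since f vanishes
  below the threshold, p never drops below \<theta>. If \<theta> < |x|, then p is trapped between
  min(p(t0), |x|) and max(p(t0), |x|), where f(p - \<theta>) is bounded away from 0, so
  (p - |x|)^2 decreases at a uniform rate during every pulse and p \<rightarrow> |x|. The
  orthogonal part |w|^2 - p^2/|x|^2 obeys r' = -2 \<alpha> f(p - \<theta>) p^2 r and vanishes in
  the limit likewise, hence w \<rightarrow> x/|x|. If \<theta> \<ge> |x|, then p decreases and p - \<theta>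
  decays to 0 in the same way.
\<close>

lemma increment_le_of_derivative_le:
  fixes h h' :: "real \<Rightarrow> real"
  assumes ab: "a \<le> b" and fin: "finite S" and cont: "continuous_on {a..b} h"
    and der: "\<And>t. t \<in> {a<..<b} - S \<Longrightarrow> (h has_real_derivative h' t) (at t)"
    and le: "\<And>t. t \<in> {a<..<b} - S \<Longrightarrow> h' t \<le> K"
  shows "h b - h a \<le> K * (b - a)"
proof -
  define k where "k t = h t - K * t" for t
  define k' where "k' t = (if t \<in> {a<..<b} - S then h' t - K else 0)" for t
  have "(k' has_integral (k b - k a)) {a..b}"
  proof (rule fundamental_theorem_of_calculus_interior_strong[OF fin ab])
    fix t assume t: "t \<in> {a<..<b} - S"
    have "(k has_real_derivative (h' t - K)) (at t)"
      unfolding k_def using der[OF t] by (auto intro!: derivative_eq_intros)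
    then show "(k has_vector_derivative k' t) (at t)"
      using t by (simp add: k'_def has_real_derivative_iff_has_vector_derivative)
  next
    show "continuous_on {a..b} k" unfolding k_def
      by (intro continuous_intros cont)
  qed
  then have "((\<lambda>t. - k' t) has_integral - (k b - k a)) {a..b}"
    by (rule has_integral_neg)
  moreover have "\<And>t. t \<in> {a..b} \<Longrightarrow> 0 \<le> - k' t" using le by (auto simp: k'_def)
  ultimately have "0 \<le> - (k b - k a)" by (rule has_integral_nonneg)
  then show ?thesis by (simp add: k_def algebra_simps)
qed

lemma lower_barrier:
  fixes h h' :: "real \<Rightarrow> real"
  assumes ab: "a \<le> b" and fin: "finite S" and cont: "continuous_on {a..b} h"
    and ha: "m \<le> h a"
    and der: "\<And>t. t \<in> {a<..<b} - S \<Longrightarrow> (h has_real_derivative h' t) (at t)"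
    and nonneg_below: "\<And>t. t \<in> {a<..<b} - S \<Longrightarrow> h t < m \<Longrightarrow> 0 \<le> h' t"
  shows "m \<le> h b"
proof (rule ccontr)
  assume hb: "\<not> m \<le> h b"
  define K where "K = {t \<in> {a..b}. m \<le> h t}"
  have "closed K" unfolding K_def
    by (rule continuous_on_closed_Collect_le) (auto intro: cont continuous_intros)
  moreover have "K \<noteq> {}" "bdd_above K" using ha ab by (auto simp: K_def bdd_above_def)
  ultimately have sK: "Sup K \<in> K" by (rule closed_contains_Sup[rotated -1])
  have above: "t \<le> Sup K" if "t \<in> K" for t by (rule cSup_upper[OF that \<open>bdd_above K\<close>])
  have s: "a \<le> Sup K" "Sup K < b" "m \<le> h (Sup K)"
    using sK hb by (auto simp: K_def order.order_iff_strict)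
  \<comment> \<open>after the last time s = Sup K at which h \<ge> m, h stays below m and hence cannot decrease\<close>
  have "(-h) b - (-h) (Sup K) \<le> 0 * (b - Sup K)"
  proof (rule increment_le_of_derivative_le[OF _ fin, where h'="\<lambda>t. - h' t"])
    show "Sup K \<le> b" "continuous_on {Sup K..b} (- h)"
      using cont s by (auto intro: continuous_on_subset continuous_intros simp: fun_Compl_def)
  next
    fix t assume t: "t \<in> {Sup K<..<b} - S"
    then have t': "t \<in> {a<..<b} - S" using s by auto
    show "((- h) has_real_derivative - h' t) (at t)"
      using der[OF t'] by (auto intro!: derivative_eq_intros simp: fun_Compl_def)
    have "t \<notin> K" using above t by force
    then show "- h' t \<le> 0" using nonneg_below[OF t'] t' by (auto simp: K_def)
  qed
  then show False using s hb by simp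
qed

lemma continuous_pos_bounded_below_on_interval:
  fixes f :: "real \<Rightarrow> real"
  assumes "continuous_on UNIV f" "\<forall>u>0. f u > 0" "lo > 0"
  shows "\<exists>c>0. \<forall>u\<in>{lo..hi}. c \<le> f u"
proof (cases "lo \<le> hi")
  case False then show ?thesis by (intro exI[of _ 1]) auto
next
  case True
  obtain u0 where u0: "u0 \<in> {lo..hi}" "\<forall>y\<in>{lo..hi}. f u0 \<le> f y"
    using continuous_attains_inf[of "{lo..hi}" f] True continuous_on_subset[OF assms(1)]
    by auto
  then have "f u0 > 0" using assms by auto
  then show ?thesis using u0 by blast
qed

lemma has_real_derivative_inner_left:
  fixes w :: "real \<Rightarrow> 'a::real_inner"
  assumes "(w has_vector_derivative w') (at t)"
  shows "((\<lambda>r. w r \<bullet> x) has_real_derivative (w' \<bullet> x)) (at t)"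
proof -
  have "((\<lambda>r. w r \<bullet> x) has_derivative (\<lambda>h. (h *\<^sub>R w') \<bullet> x)) (at t)"
    using assms unfolding has_vector_derivative_def by (rule has_derivative_inner_left)
  moreover have "(\<lambda>h. (h *\<^sub>R w') \<bullet> x) = (*) (w' \<bullet> x)" by (auto simp: fun_eq_iff)
  ultimately show ?thesis by (simp add: has_field_derivative_def)
qed

lemma has_real_derivative_inner_self:
  fixes w :: "real \<Rightarrow> 'a::real_inner"
  assumes "(w has_vector_derivative w') (at t)"
  shows "((\<lambda>r. w r \<bullet> w r) has_real_derivative (2 * (w t \<bullet> w'))) (at t)"
proof -
  have d: "(w has_derivative (\<lambda>h. h *\<^sub>R w')) (at t)"
    using assms unfolding has_vector_derivative_def .
  have "((\<lambda>r. w r \<bullet> w r) has_derivative (\<lambda>h. w t \<bullet> (h *\<^sub>R w') + (h *\<^sub>R w') \<bullet> w t)) (at t)"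
    by (rule has_derivative_inner[OF d d])
  moreover have "(\<lambda>h. w t \<bullet> (h *\<^sub>R w') + (h *\<^sub>R w') \<bullet> w t) = (*) (2 * (w t \<bullet> w'))"
    by (auto simp: fun_eq_iff inner_commute algebra_simps)
  ultimately show ?thesis by (simp add: has_field_derivative_def)
qed

section \<open>Separated pulse trains\<close>

locale pulses =
  fixes DT :: real and tau :: "nat \<Rightarrow> real"
  assumes DT_pos: "DT > 0" and tau_sep: "\<forall>j. tau (Suc j) > tau j + DT"
begin

lemma tau_gap: "i < j \<Longrightarrow> tau i + DT < tau j"
proof (induction j)
  case 0 then show ?case by simp
next
  case (Suc j)
  then have "tau i + DT \<le> tau j + DT" using DT_pos by (cases "i = j") auto
  then show ?case using tau_sep by (meson order.strict_trans1)
qed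

lemma tau_mono: "i \<le> j \<Longrightarrow> tau i \<le> tau j"
  using tau_gap[of i j] DT_pos by (cases "i = j") auto

lemma tau_unbounded: "\<exists>j. T \<le> tau j"
proof -
  have lin: "tau 0 + real j * DT \<le> tau j" for j
  proof (induction j)
    case (Suc j) then show ?case using tau_sep[rule_format, of j] by (simp add: algebra_simps)
  qed simp
  obtain j where "(T - tau 0) / DT < real j" using reals_Archimedean2 by blast
  then have "T - tau 0 < real j * DT" using DT_pos by (simp add: field_simps)
  then show ?thesis using lin[of j] by (intro exI[of _ j]) simp
qed

definition active :: "real \<Rightarrow> bool" where
  "active r \<longleftrightarrow> (\<exists>j. tau j \<le> r \<and> r \<le> tau j + DT)"

lemma suminf_pulse: "(\<Sum>j. pulse DT (r - tau j)) = (if active r then 1 else 0)"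
proof (cases "active r")
  case True
  then obtain j where j: "tau j \<le> r" "r \<le> tau j + DT" by (auto simp: active_def)
  have "pulse DT (r - tau k) = (if k = j then 1 else 0)" for k
  proof (cases "k = j")
    case False
    then have "k < j \<or> j < k" by auto
    then show ?thesis using tau_gap[of k j] tau_gap[of j k] j by (auto simp: pulse_def)
  qed (use j in \<open>simp add: pulse_def\<close>)
  then have "(\<lambda>k. pulse DT (r - tau k)) sums 1"
    using sums_single[of j "\<lambda>_. 1::real"] by presburger
  then show ?thesis using True by (simp add: sums_iff)
next
  case False
  then have "(\<lambda>k. pulse DT (r - tau k)) = (\<lambda>k. 0)"
    by (auto simp: active_def pulse_def fun_eq_iff)
  then show ?thesis using False by simp
qed

definition switch_times :: "real set" where
  "switch_times = range tau \<union> range (\<lambda>j. tau j + DT)"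

lemma finite_switch_times_le: "finite (switch_times \<inter> {..b})"
proof -
  obtain N where N: "b < tau N" using tau_unbounded[of "b + 1"] by (meson less_add_one order_less_le_trans)
  have "j \<le> N" if "tau j \<le> b" for j
    using that N tau_gap[of N j] DT_pos by (cases "j \<le> N") auto
  then have "switch_times \<inter> {..b} \<subseteq> tau ` {..N} \<union> (\<lambda>j. tau j + DT) ` {..N}"
    using DT_pos by (auto simp: switch_times_def)
  then show ?thesis by (rule finite_subset) auto
qed

lemma active_if_no_switch_between:
  assumes "active r" and "switch_times \<inter> {min r r'..max r r'} = {}"
  shows "active r'"
proof -
  obtain j where "tau j \<le> r" "r \<le> tau j + DT" using assms(1) by (auto simp: active_def)
  moreover have "tau j \<notin> {min r r'..max r r'}" "tau j + DT \<notin> {min r r'..max r r'}"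
    using assms(2) unfolding switch_times_def by blast+
  ultimately have "tau j \<le> r' \<and> r' \<le> tau j + DT" by auto
  then show ?thesis by (auto simp: active_def)
qed

lemma active_eventually_constant:
  assumes "r \<notin> switch_times"
  shows "\<forall>\<^sub>F r' in nhds r. active r' \<longleftrightarrow> active r"
proof -
  have "open (- (switch_times \<inter> {..r + 1}))"
    using finite_switch_times_le by (intro open_Compl finite_imp_closed)
  then obtain e where e: "e > 0" "ball r e \<subseteq> - (switch_times \<inter> {..r + 1})"
    using assms by (auto simp: open_contains_ball)
  have "switch_times \<inter> {min r r'..max r r'} = {}" if "dist r' r < min e 1" for r'
  proof -
    have "{min r r'..max r r'} \<subseteq> ball r e \<inter> {..r + 1}"
      using that by (auto simp: dist_real_def)
    then show ?thesis using e(2) by blast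
  qed
  then show ?thesis
    unfolding eventually_nhds_metric using e(1) active_if_no_switch_between
    by (intro exI[of _ "min e 1"]) (auto simp: min.commute max.commute)
qed

lemma increment_le_off_switch_times:
  fixes h h' :: "real \<Rightarrow> real"
  assumes "s \<le> t" "continuous_on {s..t} h"
    and "\<And>u. s < u \<Longrightarrow> u < t \<Longrightarrow> u \<notin> switch_times \<Longrightarrow> (h has_real_derivative h' u) (at u)"
    and "\<And>u. s < u \<Longrightarrow> u < t \<Longrightarrow> u \<notin> switch_times \<Longrightarrow> h' u \<le> K"
  shows "h t - h s \<le> K * (t - s)"
  using assms finite_switch_times_le[of t] by (intro increment_le_of_derivative_le) auto

text \<open>
  While h \<ge> L, every pulse lowers h by at least c DT, so h drops below every L > 0;
  being nonincreasing, it then stays there.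
\<close>
lemma tendsto_zero_if_decreasing_on_pulses:
  fixes h h' :: "real \<Rightarrow> real"
  assumes cont: "\<And>b. continuous_on {t0..b} h"
    and der: "\<And>t. t0 < t \<Longrightarrow> t \<notin> switch_times \<Longrightarrow> (h has_real_derivative h' t) (at t)"
    and nonpos: "\<And>t. t0 < t \<Longrightarrow> h' t \<le> 0"
    and nonneg: "\<And>t. t0 \<le> t \<Longrightarrow> 0 \<le> h t"
    and rate: "\<And>L. 0 < L \<Longrightarrow> \<exists>c>0. \<forall>t>t0. active t \<longrightarrow> L \<le> h t \<longrightarrow> h' t \<le> - c"
  shows "(h \<longlongrightarrow> 0) at_top"
proof -
  have increment: "h t - h s \<le> K * (t - s)"
    if "t0 \<le> s" "s \<le> t" "\<And>u. s < u \<Longrightarrow> u < t \<Longrightarrow> u \<notin> switch_times \<Longrightarrow> h' u \<le> K" for s t K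
    using that der cont[of t]
    by (intro increment_le_off_switch_times[where h' = h']) (auto intro: continuous_on_subset)
  have mono: "h t \<le> h s" if "t0 \<le> s" "s \<le> t" for s t
    using increment[OF that, of 0] nonpos that by simp
  have below: "\<exists>T\<ge>t0. h T < e" if "e > 0" for e
  proof (rule ccontr)
    assume "\<not> (\<exists>T\<ge>t0. h T < e)"
    then have big: "\<And>T. t0 \<le> T \<Longrightarrow> e \<le> h T" by force
    obtain c where c: "c > 0" "\<forall>t>t0. active t \<longrightarrow> e \<le> h t \<longrightarrow> h' t \<le> - c"
      using rate[OF \<open>e > 0\<close>] by blast
    obtain j0 where j0: "t0 \<le> tau j0" using tau_unbounded by blast
    have drop: "h (tau (j0 + k)) \<le> h (tau j0) - real k * (c * DT)" for k
    proof (induction k)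
      case (Suc k)
      define s where "s = tau (j0 + k)"
      have s: "t0 \<le> s" "s + DT \<le> tau (j0 + Suc k)"
        using j0 tau_mono[of j0 "j0 + k"] tau_sep by (auto simp: s_def less_imp_le)
      have "h (s + DT) - h s \<le> (- c) * (s + DT - s)"
      proof (rule increment)
        fix u assume u: "s < u" "u < s + DT"
        then have "active u" by (auto simp: active_def s_def intro!: exI[of _ "j0 + k"])
        then show "h' u \<le> - c" using c(2) s u big[of u] by auto
      qed (use s DT_pos in auto)
      moreover have "h (tau (j0 + Suc k)) \<le> h (s + DT)" using mono s DT_pos by simp
      ultimately show ?case using Suc.IH by (simp add: s_def algebra_simps)
    qed simp
    obtain k where "h (tau j0) / (c * DT) < real k" using reals_Archimedean2 by blast
    then have "h (tau (j0 + k)) < 0" using drop[of k] c DT_pos by (simp add: field_simps)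
    moreover have "t0 \<le> tau (j0 + k)" using j0 tau_mono[of j0 "j0 + k"] by simp
    ultimately show False using nonneg by force
  qed
  show ?thesis
  proof (rule tendstoI)
    fix e :: real assume "e > 0"
    then obtain T where "t0 \<le> T" "h T < e" using below by blast
    then show "\<forall>\<^sub>F t in at_top. dist (h t) 0 < e"
      unfolding eventually_at_top_linorder using mono nonneg by force
  qed
qed

lemma tendsto_zero_if_proportional_decay_on_pulses:
  fixes h h' k :: "real \<Rightarrow> real"
  assumes cont: "\<And>b. continuous_on {t0..b} h"
    and der: "\<And>t. t0 < t \<Longrightarrow> t \<notin> switch_times \<Longrightarrow> (h has_real_derivative h' t) (at t)"
    and decay: "\<And>t. t0 < t \<Longrightarrow> active t \<Longrightarrow> h' t = - k t * h t"
    and still: "\<And>t. \<not> active t \<Longrightarrow> h' t = 0"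
    and rate: "\<And>t. t0 < t \<Longrightarrow> active t \<Longrightarrow> \<kappa> \<le> k t" and "0 < \<kappa>"
    and nonneg: "\<And>t. t0 \<le> t \<Longrightarrow> 0 \<le> h t"
  shows "(h \<longlongrightarrow> 0) at_top"
proof (rule tendsto_zero_if_decreasing_on_pulses[OF cont der _ nonneg])
  show "h' t \<le> 0" if "t0 < t" for t
  proof (cases "active t")
    case True
    then show ?thesis
      using decay[OF that] rate[OF that] \<open>0 < \<kappa>\<close> nonneg[of t] that by simp
  qed (simp add: still)
  show "\<exists>c>0. \<forall>t>t0. active t \<longrightarrow> L \<le> h t \<longrightarrow> h' t \<le> - c" if "0 < L" for L
  proof (intro exI[of _ "\<kappa> * L"] conjI allI impI)
    fix t assume "t0 < t" "active t" "L \<le> h t"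
    moreover have "\<kappa> \<le> k t" using rate \<open>t0 < t\<close> \<open>active t\<close> .
    ultimately have "\<kappa> * L \<le> k t * h t"
      using \<open>0 < \<kappa>\<close> \<open>0 < L\<close> by (intro mult_mono) auto
    then show "h' t \<le> - (\<kappa> * L)" using decay \<open>t0 < t\<close> \<open>active t\<close> by simp
  qed (use \<open>0 < \<kappa>\<close> \<open>0 < L\<close> in simp)
qed

end

section \<open>The learning dynamics\<close>

locale hebbian_flow = pulses DT tau for DT :: real and tau :: "nat \<Rightarrow> real" +
  fixes f :: "real \<Rightarrow> real" and \<alpha> \<theta> t0 :: real and x w0 :: "real^'n"
    and w :: "real \<Rightarrow> real^'n"
  assumes f_cont: "continuous_on UNIV f"
    and f_nonpos: "\<forall>u\<le>0. f u = 0"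
    and f_pos: "\<forall>u>0. f u > 0"
    and x_nz: "x \<noteq> 0"
    and alpha_pos: "\<alpha> > 0"
    and theta_nonneg: "\<theta> \<ge> 0"
    and init: "w0 \<bullet> x > \<theta>"
    and sol: "\<forall>t\<ge>t0. ((\<lambda>r. learning_rhs \<alpha> f \<theta> (stimulus DT tau r x) (w r))
                 has_integral (w t - w0)) {t0..t}"
begin

definition velocity :: "real \<Rightarrow> real^'n" where
  "velocity r = learning_rhs \<alpha> f \<theta> (stimulus DT tau r x) (w r)"

definition proj :: "real \<Rightarrow> real" where
  "proj t = w t \<bullet> x"

definition proj_velocity :: "real \<Rightarrow> real" where
  "proj_velocity t = velocity t \<bullet> x"

lemma f_nonneg: "0 \<le> f u"
  using f_nonpos f_pos by (cases "u \<le> 0") (auto intro: less_imp_le)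

lemma stimulus_eq: "stimulus DT tau r x = (if active r then x else 0)"
  by (simp add: stimulus_def suminf_pulse)

lemma velocity_active:
  "active r \<Longrightarrow> velocity r = (\<alpha> * f (proj r - \<theta>) * proj r) *\<^sub>R (x - proj r *\<^sub>R w r)"
  by (simp add: velocity_def stimulus_eq learning_rhs_def neuron_v_def neuron_y_def proj_def)

lemma velocity_inactive: "\<not> active r \<Longrightarrow> velocity r = 0"
  by (simp add: velocity_def stimulus_eq learning_rhs_def neuron_y_def)

lemma has_integral_velocity:
  assumes "t0 \<le> t"
  shows "(velocity has_integral (w t - w0)) {t0..t}"
  unfolding velocity_def[abs_def] using sol assms by simp

lemma w_eq_integral: "t0 \<le> t \<Longrightarrow> w t = w0 + integral {t0..t} velocity"
  using has_integral_velocity[THEN integral_unique] by simp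

lemma continuous_on_w: "continuous_on {t0..b} w"
proof (cases "t0 \<le> b")
  case True
  have "continuous_on {t0..b} (\<lambda>t. w0 + integral {t0..t} velocity)"
    using indefinite_integral_continuous_1 has_integral_velocity[OF True]
    by (auto intro!: continuous_intros simp: has_integral_integrable)
  then show ?thesis by (rule continuous_on_eq) (simp add: w_eq_integral)
qed simp

lemma isCont_velocity:
  assumes "t0 < t" "t \<notin> switch_times"
  shows "isCont velocity t"
proof -
  let ?s = "stimulus DT tau t x"
  have w: "isCont w t"
    using continuous_on_interior[OF continuous_on_w[of "t + 1"]] assms by simp
  have f: "isCont f u" for u using f_cont by (simp add: continuous_on_eq_continuous_at)
  have "isCont (\<lambda>r. f (w r \<bullet> ?s - \<theta>)) t"
    by (rule isCont_o2[OF _ f]) (intro continuous_intros w)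
  then have "isCont (\<lambda>r. learning_rhs \<alpha> f \<theta> ?s (w r)) t"
    unfolding learning_rhs_def neuron_v_def neuron_y_def using w by (intro continuous_intros)
  moreover have "\<forall>\<^sub>F r in nhds t. velocity r = learning_rhs \<alpha> f \<theta> ?s (w r)"
    using active_eventually_constant[OF assms(2)]
    by eventually_elim (simp add: velocity_def stimulus_eq)
  ultimately show ?thesis by (simp add: isCont_cong)
qed

lemma has_vector_derivative_w:
  assumes t: "t0 < t" "t \<notin> switch_times"
  shows "(w has_vector_derivative velocity t) (at t)"
proof -
  have "velocity integrable_on {t0..t + 1}"
    using has_integral_velocity[of "t + 1"] t by (auto simp: has_integral_integrable)
  then have "((\<lambda>u. integral {t0..u} velocity) has_vector_derivative velocity t)
      (at t within {t0..t + 1} - {})"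
    by (rule integral_has_vector_derivative_continuous_at)
       (use t isCont_velocity[OF t] in \<open>auto intro: continuous_at_imp_continuous_within\<close>)
  then have "((\<lambda>u. w0 + integral {t0..u} velocity) has_vector_derivative velocity t) (at t)"
    using at_within_interior[of t "{t0..t + 1}"] t by (auto intro!: derivative_eq_intros)
  then show ?thesis
    by (rule has_vector_derivative_transform_within_open[where S = "{t0<..<t + 1}"])
       (use t w_eq_integral in auto)
qed

lemma has_real_derivative_proj:
  "t0 < t \<Longrightarrow> t \<notin> switch_times \<Longrightarrow> (proj has_real_derivative proj_velocity t) (at t)"
  unfolding proj_def proj_velocity_def
  by (rule has_real_derivative_inner_left[OF has_vector_derivative_w])

lemma continuous_on_proj: "continuous_on {t0..b} proj"
  unfolding proj_def by (intro continuous_intros continuous_on_w)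

lemma proj_velocity_active:
  "active t \<Longrightarrow> proj_velocity t = \<alpha> * f (proj t - \<theta>) * proj t * ((norm x)\<^sup>2 - (proj t)\<^sup>2)"
  by (simp add: proj_velocity_def velocity_active inner_diff_left dot_square_norm proj_def
      power2_eq_square)

lemma proj_velocity_inactive: "\<not> active t \<Longrightarrow> proj_velocity t = 0"
  by (simp add: proj_velocity_def velocity_inactive)

lemma proj_initial: "proj t0 = w0 \<bullet> x"
  using w_eq_integral[of t0] by (simp add: proj_def)

lemma proj_ge_if_repelled_below:
  assumes "t0 \<le> t" "m \<le> w0 \<bullet> x"
    and "\<And>t. t0 < t \<Longrightarrow> active t \<Longrightarrow> proj t < m \<Longrightarrow> 0 \<le> proj_velocity t"
  shows "m \<le> proj t"
proof (rule lower_barrier[OF assms(1) finite_switch_times_le[of t] continuous_on_proj])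
  show "m \<le> proj t0" using assms(2) by (simp add: proj_initial)
next
  fix u assume u: "u \<in> {t0<..<t} - switch_times \<inter> {..t}"
  then show "(proj has_real_derivative proj_velocity u) (at u)"
    using has_real_derivative_proj by auto
  show "proj u < m \<Longrightarrow> 0 \<le> proj_velocity u"
    using u assms(3)[of u] proj_velocity_inactive[of u] by (cases "active u") auto
qed

lemma proj_le_if_repelled_above:
  assumes "t0 \<le> t" "w0 \<bullet> x \<le> M"
    and "\<And>t. t0 < t \<Longrightarrow> active t \<Longrightarrow> M < proj t \<Longrightarrow> proj_velocity t \<le> 0"
  shows "proj t \<le> M"
proof -
  have "- M \<le> - proj t"
  proof (rule lower_barrier[OF assms(1) finite_switch_times_le[of t]])
    show "continuous_on {t0..t} (\<lambda>t. - proj t)" by (intro continuous_intros continuous_on_proj)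
    show "- M \<le> - proj t0" using assms(2) by (simp add: proj_initial)
  next
    fix u assume u: "u \<in> {t0<..<t} - switch_times \<inter> {..t}"
    then show "((\<lambda>t. - proj t) has_real_derivative - proj_velocity u) (at u)"
      using has_real_derivative_proj by (auto intro!: derivative_eq_intros)
    show "- proj u < - M \<Longrightarrow> 0 \<le> - proj_velocity u"
      using u assms(3)[of u] proj_velocity_inactive[of u] by (cases "active u") auto
  qed
  then show ?thesis by simp
qed

lemma proj_ge_threshold:
  assumes "t0 \<le> t"
  shows "\<theta> \<le> proj t"
proof (rule proj_ge_if_repelled_below[OF assms])
  show "\<theta> \<le> w0 \<bullet> x" using init by simp
  fix s assume "t0 < s" "active s" "proj s < \<theta>"
  then show "0 \<le> proj_velocity s" using f_nonpos by (simp add: proj_velocity_active)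
qed

lemma proj_between:
  assumes "t0 \<le> t"
  shows "min (w0 \<bullet> x) (norm x) \<le> proj t" "proj t \<le> max (w0 \<bullet> x) (norm x)"
proof -
  show "min (w0 \<bullet> x) (norm x) \<le> proj t"
  proof (rule proj_ge_if_repelled_below[OF assms])
    fix s assume s: "t0 < s" "active s" "proj s < min (w0 \<bullet> x) (norm x)"
    moreover have "0 \<le> proj s" using proj_ge_threshold[of s] theta_nonneg s(1) by simp
    ultimately have "(proj s)\<^sup>2 \<le> (norm x)\<^sup>2" by (auto intro: power_mono)
    then show "0 \<le> proj_velocity s"
      using proj_velocity_active[OF s(2)] \<open>0 \<le> proj s\<close> f_nonneg alpha_pos by simp
  qed simp
  show "proj t \<le> max (w0 \<bullet> x) (norm x)"
  proof (rule proj_le_if_repelled_above[OF assms])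
    fix s assume s: "t0 < s" "active s" "max (w0 \<bullet> x) (norm x) < proj s"
    then have "norm x < proj s" by simp
    then have "0 \<le> proj s" using norm_ge_zero[of x] by linarith
    moreover have "(norm x)\<^sup>2 \<le> (proj s)\<^sup>2" using \<open>norm x < proj s\<close> by (intro power_mono) auto
    ultimately show "proj_velocity s \<le> 0"
      using proj_velocity_active[OF s(2)] f_nonneg alpha_pos by (simp add: mult_nonneg_nonpos)
  qed simp
qed

lemma proj_and_gain_bounded_below:
  assumes "\<theta> < norm x"
  obtains m c where "0 < m" "0 < c"
    "\<And>t. t0 \<le> t \<Longrightarrow> m \<le> proj t" "\<And>t. t0 \<le> t \<Longrightarrow> c \<le> f (proj t - \<theta>)"
proof -
  have "0 < min (w0 \<bullet> x) (norm x) - \<theta>" using assms init by simp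
  then obtain c where c: "c > 0"
    "\<forall>u\<in>{min (w0 \<bullet> x) (norm x) - \<theta>..max (w0 \<bullet> x) (norm x) - \<theta>}. c \<le> f u"
    using continuous_pos_bounded_below_on_interval[OF f_cont f_pos] by blast
  show thesis
  proof
    show "0 < min (w0 \<bullet> x) (norm x)" using init theta_nonneg x_nz by simp
    show "c \<le> f (proj t - \<theta>)" if "t0 \<le> t" for t using c(2) proj_between[OF that] by simp
  qed (use c(1) proj_between in auto)
qed

lemma proj_tendsto_norm:
  assumes "\<theta> < norm x"
  shows "(proj \<longlongrightarrow> norm x) at_top"
proof -
  obtain m c where m: "0 < m" "\<And>t. t0 \<le> t \<Longrightarrow> m \<le> proj t"
    and c: "0 < c" "\<And>t. t0 \<le> t \<Longrightarrow> c \<le> f (proj t - \<theta>)"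
    using proj_and_gain_bounded_below[OF assms] by metis
  have "((\<lambda>t. (proj t - norm x)\<^sup>2) \<longlongrightarrow> 0) at_top"
  proof (rule tendsto_zero_if_proportional_decay_on_pulses
      [where h' = "\<lambda>t. 2 * (proj t - norm x) * proj_velocity t"
         and k = "\<lambda>t. 2 * \<alpha> * f (proj t - \<theta>) * proj t * (norm x + proj t)"
         and \<kappa> = "2 * \<alpha> * c * m * (norm x + m)"])
    show "continuous_on {t0..b} (\<lambda>t. (proj t - norm x)\<^sup>2)" for b
      by (intro continuous_intros continuous_on_proj)
    show "((\<lambda>t. (proj t - norm x)\<^sup>2) has_real_derivative 2 * (proj t - norm x) * proj_velocity t)
        (at t)" if "t0 < t" "t \<notin> switch_times" for t
      using has_real_derivative_proj[OF that] by (auto intro!: derivative_eq_intros)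
    show "2 * (proj t - norm x) * proj_velocity t
        = - (2 * \<alpha> * f (proj t - \<theta>) * proj t * (norm x + proj t)) * (proj t - norm x)\<^sup>2"
      if "active t" for t
      unfolding proj_velocity_active[OF that] power2_eq_square by (simp add: algebra_simps)
    show "2 * \<alpha> * c * m * (norm x + m) \<le> 2 * \<alpha> * f (proj t - \<theta>) * proj t * (norm x + proj t)"
      if "t0 < t" for t
      using c m(1) m(2)[of t] alpha_pos that f_nonneg
      by (intro mult_mono) (auto intro: mult_nonneg_nonneg)
  qed (use proj_velocity_inactive alpha_pos c m x_nz in
      \<open>auto intro!: mult_pos_pos add_pos_nonneg\<close>)
  then have "((\<lambda>t. sqrt ((proj t - norm x)\<^sup>2)) \<longlongrightarrow> sqrt 0) at_top"
    by (rule tendsto_real_sqrt)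
  then show ?thesis by (simp add: tendsto_rabs_zero_iff LIM_zero_iff)
qed

lemma w_tendsto_normalized:
  assumes "\<theta> < norm x"
  shows "(w \<longlongrightarrow> x /\<^sub>R norm x) at_top"
proof -
  obtain m c where m: "0 < m" "\<And>t. t0 \<le> t \<Longrightarrow> m \<le> proj t"
    and c: "0 < c" "\<And>t. t0 \<le> t \<Longrightarrow> c \<le> f (proj t - \<theta>)"
    using proj_and_gain_bounded_below[OF assms] by metis
  have x: "0 < norm x" using x_nz by simp
  define u where "u t = w t - (proj t / (norm x)\<^sup>2) *\<^sub>R x" for t
  define r where "r t = w t \<bullet> w t - (proj t)\<^sup>2 / (norm x)\<^sup>2" for t
  have xx: "x \<bullet> x = (norm x)\<^sup>2" by (rule dot_square_norm)
  have "u t \<bullet> u t = r t" for t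
    using x by (simp add: u_def r_def inner_diff_left inner_diff_right xx proj_def inner_commute
        field_simps power2_eq_square)
  then have r_eq: "r t = (norm (u t))\<^sup>2" for t by (simp add: power2_norm_eq_inner)
  have "(r \<longlongrightarrow> 0) at_top"
  proof (rule tendsto_zero_if_proportional_decay_on_pulses
      [where h' = "\<lambda>t. 2 * (w t \<bullet> velocity t) - 2 * proj t * proj_velocity t / (norm x)\<^sup>2"
         and k = "\<lambda>t. 2 * \<alpha> * f (proj t - \<theta>) * (proj t)\<^sup>2" and \<kappa> = "2 * \<alpha> * c * m\<^sup>2"])
    show "continuous_on {t0..b} r" for b
      unfolding r_def by (intro continuous_intros continuous_on_proj continuous_on_w) (use x in simp)
    show "(r has_real_derivative
        2 * (w t \<bullet> velocity t) - 2 * proj t * proj_velocity t / (norm x)\<^sup>2) (at t)"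
      if "t0 < t" "t \<notin> switch_times" for t
      unfolding r_def
      using has_real_derivative_proj[OF that] has_real_derivative_inner_self[OF has_vector_derivative_w[OF that]] x_nz
      by (auto intro!: derivative_eq_intros simp: field_simps power2_eq_square)
    show "2 * (w t \<bullet> velocity t) - 2 * proj t * proj_velocity t / (norm x)\<^sup>2
        = - (2 * \<alpha> * f (proj t - \<theta>) * (proj t)\<^sup>2) * r t" if "active t" for t
      using x unfolding r_def proj_velocity_active[OF that] velocity_active[OF that]
      by (simp add: inner_diff_right proj_def field_simps power2_eq_square)
    show "2 * \<alpha> * c * m\<^sup>2 \<le> 2 * \<alpha> * f (proj t - \<theta>) * (proj t)\<^sup>2" if "t0 < t" for t
      using c m(1) m(2)[of t] alpha_pos that f_nonneg
      by (intro mult_mono power_mono) (auto intro: mult_nonneg_nonneg)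
  qed (use proj_velocity_inactive velocity_inactive alpha_pos c m r_eq in auto)
  then have "((\<lambda>t. norm (u t)) \<longlongrightarrow> 0) at_top"
    using tendsto_real_sqrt[of r 0] by (simp add: r_eq)
  then have lim: "((\<lambda>t. u t + (proj t / (norm x)\<^sup>2) *\<^sub>R x)
      \<longlongrightarrow> 0 + (norm x / (norm x)\<^sup>2) *\<^sub>R x) at_top"
    using proj_tendsto_norm[OF assms] x by (intro tendsto_intros) (auto simp: tendsto_norm_zero_iff)
  have w_eq: "(\<lambda>t. u t + (proj t / (norm x)\<^sup>2) *\<^sub>R x) = w" by (simp add: u_def fun_eq_iff)
  have limit_eq: "0 + (norm x / (norm x)\<^sup>2) *\<^sub>R x = x /\<^sub>R norm x"
    using x by (simp add: power2_eq_square divide_inverse)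
  show ?thesis using lim unfolding w_eq limit_eq .
qed

lemma proj_velocity_nonpos:
  assumes "norm x \<le> \<theta>" "t0 < t"
  shows "proj_velocity t \<le> 0"
proof (cases "active t")
  case True
  have "norm x \<le> proj t" using proj_ge_threshold[of t] assms by simp
  then have "0 \<le> proj t" using norm_ge_zero[of x] by linarith
  moreover have "(norm x)\<^sup>2 \<le> (proj t)\<^sup>2" using \<open>norm x \<le> proj t\<close> by (intro power_mono) auto
  ultimately show ?thesis using proj_velocity_active[OF True] f_nonneg alpha_pos
    by (simp add: mult_nonneg_nonpos)
qed (simp add: proj_velocity_inactive)

lemma proj_tendsto_threshold:
  assumes "norm x \<le> \<theta>"
  shows "(proj \<longlongrightarrow> \<theta>) at_top"
proof -
  have p_le: "proj t \<le> w0 \<bullet> x" if "t0 \<le> t" for t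
    using proj_between(2)[OF that] assms init by simp
  have "((\<lambda>t. proj t - \<theta>) \<longlongrightarrow> 0) at_top"
  proof (rule tendsto_zero_if_decreasing_on_pulses[where h' = proj_velocity])
    show "continuous_on {t0..b} (\<lambda>t. proj t - \<theta>)" for b
      by (intro continuous_intros continuous_on_proj)
    show "((\<lambda>t. proj t - \<theta>) has_real_derivative proj_velocity t) (at t)"
      if "t0 < t" "t \<notin> switch_times" for t
      using has_real_derivative_proj[OF that] by (auto intro!: derivative_eq_intros)
  next
    fix L :: real assume L: "0 < L"
    obtain c where c: "c > 0" "\<forall>u\<in>{L..w0 \<bullet> x - \<theta>}. c \<le> f u"
      using continuous_pos_bounded_below_on_interval[OF f_cont f_pos L] by blast
    have "(norm x)\<^sup>2 < (\<theta> + L)\<^sup>2" using assms L by (intro power_strict_mono) auto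
    show "\<exists>c>0. \<forall>t>t0. active t \<longrightarrow> L \<le> proj t - \<theta> \<longrightarrow> proj_velocity t \<le> - c"
    proof (intro exI[of _ "\<alpha> * c * (\<theta> + L) * ((\<theta> + L)\<^sup>2 - (norm x)\<^sup>2)"] conjI allI impI)
      fix t assume t: "t0 < t" "active t" "L \<le> proj t - \<theta>"
      have "(\<theta> + L)\<^sup>2 \<le> (proj t)\<^sup>2" using t L theta_nonneg by (intro power_mono) auto
      moreover have "c \<le> f (proj t - \<theta>)" using c t p_le[of t] by auto
      ultimately have "\<alpha> * c * (\<theta> + L) * ((\<theta> + L)\<^sup>2 - (norm x)\<^sup>2)
          \<le> \<alpha> * f (proj t - \<theta>) * proj t * ((proj t)\<^sup>2 - (norm x)\<^sup>2)"
        using alpha_pos c t L theta_nonneg assms \<open>(norm x)\<^sup>2 < (\<theta> + L)\<^sup>2\<close>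
        by (intro mult_mono) auto
      then show "proj_velocity t \<le> - (\<alpha> * c * (\<theta> + L) * ((\<theta> + L)\<^sup>2 - (norm x)\<^sup>2))"
        using proj_velocity_active[OF t(2)] by (simp add: algebra_simps)
    qed (use alpha_pos c L theta_nonneg \<open>(norm x)\<^sup>2 < (\<theta> + L)\<^sup>2\<close> in simp)
  qed (use proj_velocity_nonpos assms proj_ge_threshold in auto)
  then show ?thesis by (simp add: LIM_zero_iff)
qed

end

theorem lemma2:
  fixes f :: "real \<Rightarrow> real" and x w0 :: "real^'n"
    and w :: "real \<Rightarrow> real^'n" and tau :: "nat \<Rightarrow> real"
    and DT \<alpha> \<theta> t0 :: real
  assumes f_cont: "continuous_on UNIV f"
    and f_loclip: "\<forall>u. \<exists>e>0. \<exists>L. L-lipschitz_on (cball u e) f"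
    and f_nonpos: "\<forall>u\<le>0. f u = 0"
    and f_pos: "\<forall>u>0. f u > 0"
    and DT_pos: "DT > 0"
    and tau_sep: "\<forall>j. tau (Suc j) > tau j + DT"
    and x_nz: "x \<noteq> 0"
    and alpha_pos: "\<alpha> > 0"
    and w0_nz: "w0 \<noteq> 0"
    and sol: "\<forall>t\<ge>t0. ((\<lambda>r. learning_rhs \<alpha> f \<theta> (stimulus DT tau r x) (w r))
                 has_integral (w t - w0)) {t0..t}"
    and theta_nonneg: "\<theta> \<ge> 0"
    and init: "w0 \<bullet> x > \<theta>"
    and persistent: "\<forall>t'\<ge>t0. \<exists>t''>t'. stimulus DT tau t'' x \<noteq> 0"
  shows "(\<theta> < norm x \<longrightarrow> (w \<longlongrightarrow> x /\<^sub>R norm x) at_top) \<and>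
         (\<theta> \<ge> norm x \<longrightarrow>
            ((\<lambda>t. w t \<bullet> (x /\<^sub>R norm x)) \<longlongrightarrow> \<theta> / norm x) at_top)"
proof -
  \<comment> \<open>f_loclip and w0_nz only matter for existence and uniqueness of the solution, which is given;
     persistence is automatic for infinitely many separated pulses.\<close>
  interpret hebbian_flow DT tau f \<alpha> \<theta> t0 x w0 w
    by unfold_locales (use assms in auto)
  have "(\<lambda>t. w t \<bullet> (x /\<^sub>R norm x)) = (\<lambda>t. proj t / norm x)"
    by (simp add: proj_def divide_inverse_commute)
  moreover have "norm x \<le> \<theta> \<Longrightarrow> ((\<lambda>t. proj t / norm x) \<longlongrightarrow> \<theta> / norm x) at_top"
    using proj_tendsto_threshold x_nz by (intro tendsto_intros) auto
  ultimately show ?thesis using w_tendsto_normalized by simp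
qed

end
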